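(* Assume the standing assumptions below, and let $\{u^{(k)}\}_{k\ge0}$ be a $\Delta$-sequence in $\mathbf w$. Then the sequences of signed left stretches $\{\sigma^{(k)}\}_{k\ge1}$ and of signed right stretches $\{\rho^{(k)}\}_{k\ge1}$ are ultimately periodic.
   Context: Standing assumptions: $\Sigma$ is a finite alphabet; $h:\Sigma^*\to\Sigma^*$ is a nonerasing morphism prolongable on $w_0$ and $\mathbf w=w_0w_1w_2\cdots=h^\omega(w_0)$ is aperiodic; $h$ satisfies $\mathrm{alph}(h^n(a))=\mathrm{alph}(h(a))$ for all $a\in\Sigma$, $n\ge1$ ($\mathrm{alph}(w)$ = set of letters of $w$); $M=\max\{|h(a)|:a\in\Sigma\}$; $\Delta\subsetneq\Sigma$ is nonempty and $\overline\Delta=\Sigma\setminus\Delta$. Positions are indexed from $0$. A factor $w_i\cdots w_j$ is a $\Delta$-block if all its letters lie in $\Delta$; it is maximal if moreover $w_{j+1}\in\overline\Delta$ and either $i=0$ or $w_{i-1}\in\overline\Delta$. Occurrences are factors with their position intervals; $u'\prec u$ means the interval of $u'$ is contained in that of $u$. Since $\mathbf w=h(w_0)h(w_1)\cdots$, $h(w_p\cdots w_q)$ denotes the occurrence occupying the positions of the blocks $h(w_p),\dots,h(w_q)$ in this factorization. A $\Delta$-sequence is a sequence $u^{(k)}=w_{i_k}\cdots w_{j_k}$ ($k\ge0$) of maximal $\Delta$-blocks with $i_k>M$, $|u^{(k)}|>M^2$, and $h(w_{i_k+M}\cdots w_{j_k-M})\prec u^{(k+1)}\prec h(w_{i_k-M+1}\cdots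 w_{j_k+M-1})$ for all $k$. Stretches: for $k\ge0$ let the block $h(w_{i_k})$ occupy positions $r_{k+1},\dots,s_{k+1}$ and $h(w_{j_k})$ occupy positions $m_{k+1},\dots,n_{k+1}$. The left stretch $\sigma^{(k+1)}$ is: the positive word $w_{i_{k+1}}\cdots w_{r_{k+1}-1}$ if $i_{k+1}<r_{k+1}$; the negative word $w_{r_{k+1}}\cdots w_{i_{k+1}-1}$ if $i_{k+1}>r_{k+1}$; and $\epsilon$ if $i_{k+1}=r_{k+1}$. The right stretch $\rho^{(k+1)}$ is: the positive word $w_{n_{k+1}+1}\cdots w_{j_{k+1}}$ if $j_{k+1}>n_{k+1}$; the negative word $w_{j_{k+1}+1}\cdots w_{n_{k+1}}$ if $j_{k+1}<n_{k+1}$; and $\epsilon$ if $j_{k+1}=n_{k+1}$. Stretches are regarded as pairs (word, sign). *)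

theory Defs
  imports Main
begin

definition hom :: "('a \<Rightarrow> 'a list) \<Rightarrow> 'a list \<Rightarrow> 'a list" where
  "hom h xs = concat (map h xs)"

definition nonerasing :: "('a \<Rightarrow> 'a list) \<Rightarrow> bool" where
  "nonerasing h \<longleftrightarrow> (\<forall>a. h a \<noteq> [])"

definition prolongable :: "('a \<Rightarrow> 'a list) \<Rightarrow> 'a \<Rightarrow> bool" where
  "prolongable h a \<longleftrightarrow> (\<exists>x. x \<noteq> [] \<and> h a = a # x)"

text \<open>The fixed point h^omega(a): letter i is letter i of h^(i+1)(a)
  (which has length at least i+2 when h is nonerasing and prolongable on a).\<close>
definition omega_word :: "('a \<Rightarrow> 'a list) \<Rightarrow> 'a \<Rightarrow> nat \<Rightarrow> 'a" where
  "omega_word h a i = ((hom h ^^ Suc i) [a]) ! i"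

definition ultimately_periodic :: "(nat \<Rightarrow> 'b) \<Rightarrow> bool" where
  "ultimately_periodic f \<longleftrightarrow> (\<exists>p>0. \<exists>N. \<forall>n\<ge>N. f (n + p) = f n)"

definition max_len :: "('a::finite \<Rightarrow> 'a list) \<Rightarrow> nat" where
  "max_len h = Max (range (\<lambda>a. length (h a)))"

text \<open>Starting position of the block h(w_p) in w = h(w_0) h(w_1) ...\<close>
definition hpos :: "('a \<Rightarrow> 'a list) \<Rightarrow> (nat \<Rightarrow> 'a) \<Rightarrow> nat \<Rightarrow> nat" where
  "hpos h w p = length (hom h (map w [0..<p]))"

definition max_block :: "'a set \<Rightarrow> (nat \<Rightarrow> 'a) \<Rightarrow> nat \<Rightarrow> nat \<Rightarrow> bool" where
  "max_block D w i j \<longleftrightarrow> i \<le> j \<and> (\<forall>p\<in>{i..j}. w p \<in> D) \<and> w (Suc j) \<notin> D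
      \<and> (i = 0 \<or> w (i - 1) \<notin> D)"

definition occ_le :: "nat \<times> nat \<Rightarrow> nat \<times> nat \<Rightarrow> bool" where
  "occ_le u v \<longleftrightarrow> fst v \<le> fst u \<and> snd u \<le> snd v"

text \<open>Delta-sequence given by start positions i k and end positions j k.
  h(w_p ... w_q) occupies positions hpos p .. hpos (q+1) - 1.\<close>
definition delta_sequence ::
  "('a::finite \<Rightarrow> 'a list) \<Rightarrow> (nat \<Rightarrow> 'a) \<Rightarrow> 'a set \<Rightarrow> (nat \<Rightarrow> nat) \<Rightarrow> (nat \<Rightarrow> nat) \<Rightarrow> bool" where
  "delta_sequence h w D i j \<longleftrightarrow> (let M = max_len h in
     \<forall>k. max_block D w (i k) (j k) \<and> i k > M \<and> j k - i k + 1 > M^2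
       \<and> occ_le (hpos h w (i k + M), hpos h w (j k - M + 1) - 1) (i (Suc k), j (Suc k))
       \<and> occ_le (i (Suc k), j (Suc k)) (hpos h w (i k - M + 1), hpos h w (j k + M) - 1))"

datatype 'a stretch = Pos "'a list" | Neg "'a list" | Eps

text \<open>Left stretch sigma^(k+1), from i_k (ik) and i_{k+1} (ik'); r_{k+1} = hpos ik.\<close>
definition left_stretch :: "('a \<Rightarrow> 'a list) \<Rightarrow> (nat \<Rightarrow> 'a) \<Rightarrow> nat \<Rightarrow> nat \<Rightarrow> 'a stretch" where
  "left_stretch h w ik ik' = (let r = hpos h w ik in
     if ik' < r then Pos (map w [ik'..<r])
     else if ik' > r then Neg (map w [r..<ik'])
     else Eps)"

text \<open>Right stretch rho^(k+1), from j_k (jk) and j_{k+1} (jk'); n_{k+1} = hpos (jk+1) - 1.\<close>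
definition right_stretch :: "('a \<Rightarrow> 'a list) \<Rightarrow> (nat \<Rightarrow> 'a) \<Rightarrow> nat \<Rightarrow> nat \<Rightarrow> 'a stretch" where
  "right_stretch h w jk jk' = (let n = hpos h w (Suc jk) - 1 in
     if jk' > n then Pos (map w [Suc n..<Suc jk'])
     else if jk' < n then Neg (map w [Suc jk'..<Suc n])
     else Eps)"

end

theory Submission
  imports Defs
begin

(*
  Call a letter a "exiting" (the set E below) if h(a) contains a letter outside
  Delta.  Since alph(h(h(a))) = alph(h(a)), the image of a non-exiting letter consists of
  non-exiting letters, and the image of an exiting letter contains an exiting letter.

  Fix k and let q be the LAST exiting position to the left of i_k + M (the "left tracker").
  The Delta-sequence conditions force the letter w_(i_(k+1) - 1) outside Delta to lie in the
  block h(w_q); hence i_(k+1) is the position right after the last non-Delta letter of h(w_q),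
  and the left tracker for k+1 is the position of the last exiting letter of h(w_q).  So the
  letters x_k = w_(q_k) obey x_(k+1) = f(x_k) for a fixed map f on the finite alphabet, and
  sigma^(k+2) is read off inside the block h(h(x_k)), i.e. it is a function of x_k alone.
  A sequence generated by a self-map of a finite set is ultimately periodic, hence so is the
  sequence of left stretches.  The right stretches are handled symmetrically with the FIRST
  exiting position at or after j_k - M + 1.
*)

lemma hom_Nil [simp]: "hom h [] = []"
  by (simp add: hom_def)

lemma hom_single [simp]: "hom h [a] = h a"
  by (simp add: hom_def)

lemma hom_append [simp]: "hom h (xs @ ys) = hom h xs @ hom h ys"
  by (simp add: hom_def)

lemma hom_Cons: "hom h (a # xs) = h a @ hom h xs"
  by (simp add: hom_def)

lemma set_hom: "set (hom h xs) = (\<Union>b\<in>set xs. set (h b))"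
  by (simp add: hom_def)

lemma length_hom_ge:
  assumes "nonerasing h"
  shows "length xs \<le> length (hom h xs)"
proof (induction xs)
  case (Cons a xs)
  have "h a \<noteq> []" using assms unfolding nonerasing_def by blast
  with Cons show ?case by (cases "h a") (simp_all add: hom_Cons)
qed simp

lemma length_hom_take_le: "length (hom h (take s xs)) \<le> length (hom h xs)"
proof -
  have "length (hom h xs) = length (hom h (take s xs)) + length (hom h (drop s xs))"
    by (metis append_take_drop_id hom_append length_append)
  then show ?thesis by linarith
qed

lemma length_hom_take_nth:
  assumes "e < length xs"
  shows "length (hom h (take e xs)) + length (h (xs ! e)) \<le> length (hom h xs)"
proof -
  have "xs = take e xs @ [xs ! e] @ drop (Suc e) xs"
    using assms by (simp add: Cons_nth_drop_Suc)
  then have "length (hom h xs) = length (hom h (take e xs)) + length (h (xs ! e))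
      + length (hom h (drop (Suc e) xs))"
    by (metis hom_append hom_single length_append add.assoc)
  then show ?thesis by linarith
qed

section \<open>The fixed point of a prolongable morphism\<close>

lemma iterate_starts_with:
  assumes "prolongable h a"
  shows "\<exists>rest. (hom h ^^ n) [a] = a # rest"
proof (induction n)
  case (Suc n)
  obtain x where x: "h a = a # x" using assms unfolding prolongable_def by blast
  from Suc obtain rest where "(hom h ^^ n) [a] = a # rest" by blast
  then have "(hom h ^^ Suc n) [a] = a # x @ hom h rest" using x by (simp add: hom_Cons)
  then show ?case by blast
qed simp

lemma iterate_prefix_Suc:
  assumes "prolongable h a"
  shows "\<exists>zs. (hom h ^^ Suc n) [a] = (hom h ^^ n) [a] @ zs"
proof (induction n)
  case 0
  then show ?case using assms unfolding prolongable_def by auto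
next
  case (Suc n)
  then obtain zs where "(hom h ^^ Suc n) [a] = (hom h ^^ n) [a] @ zs" by blast
  then have "(hom h ^^ Suc (Suc n)) [a] = (hom h ^^ Suc n) [a] @ hom h zs" by simp
  then show ?case by blast
qed

lemma iterate_prefix:
  assumes "prolongable h a" and "n \<le> m"
  shows "\<exists>zs. (hom h ^^ m) [a] = (hom h ^^ n) [a] @ zs"
  using assms(2)
proof (induction m rule: dec_induct)
  case (step m)
  then obtain zs where "(hom h ^^ m) [a] = (hom h ^^ n) [a] @ zs" by blast
  moreover obtain ys where "(hom h ^^ Suc m) [a] = (hom h ^^ m) [a] @ ys"
    using iterate_prefix_Suc[OF assms(1)] by blast
  ultimately show ?case by auto
qed simp

(* Each iteration strictly lengthens the word, since h(a) = a x with x nonempty. *)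
lemma iterate_length:
  assumes "nonerasing h" and "prolongable h a"
  shows "Suc n \<le> length ((hom h ^^ n) [a])"
proof (induction n)
  case (Suc n)
  obtain x where x: "x \<noteq> []" "h a = a # x" using assms(2) unfolding prolongable_def by blast
  obtain rest where rest: "(hom h ^^ n) [a] = a # rest" using iterate_starts_with[OF assms(2)] by blast
  have "(hom h ^^ Suc n) [a] = a # x @ hom h rest" using rest x by (simp add: hom_Cons)
  moreover have "length rest \<le> length (hom h rest)" using length_hom_ge[OF assms(1)] .
  ultimately show ?case using Suc rest x(1) by (cases x) auto
qed simp

lemma omega_word_nth:
  assumes "nonerasing h" and "prolongable h a" and "i < length ((hom h ^^ n) [a])"
  shows "omega_word h a i = (hom h ^^ n) [a] ! i"
proof -
  let ?m = "max n (Suc i)"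
  obtain zs where zs: "(hom h ^^ ?m) [a] = (hom h ^^ n) [a] @ zs"
    using iterate_prefix[OF assms(2), of n ?m] by auto
  obtain ys where ys: "(hom h ^^ ?m) [a] = (hom h ^^ Suc i) [a] @ ys"
    using iterate_prefix[OF assms(2), of "Suc i" ?m] by auto
  have "i < length ((hom h ^^ Suc i) [a])"
    using iterate_length[OF assms(1,2), of "Suc i"] by simp
  then have "omega_word h a i = (hom h ^^ ?m) [a] ! i"
    unfolding omega_word_def ys by (simp add: nth_append)
  also have "\<dots> = (hom h ^^ n) [a] ! i"
    unfolding zs using assms(3) by (simp add: nth_append)
  finally show ?thesis .
qed

lemma omega_word_fixed_point:
  assumes ne: "nonerasing h" and pr: "prolongable h a"
    and t: "t < length (h (omega_word h a p))"
  shows "omega_word h a (hpos h (omega_word h a) p + t) = h (omega_word h a p) ! t"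
proof -
  let ?w = "omega_word h a"
  let ?X = "(hom h ^^ Suc p) [a]"
  have lX: "Suc p \<le> length ?X" using iterate_length[OF ne pr, of "Suc p"] by simp
  have prefix: "map ?w [0..<Suc p] = take (Suc p) ?X"
  proof (rule nth_equalityI)
    fix k assume "k < length (map ?w [0..<Suc p])"
    then show "map ?w [0..<Suc p] ! k = take (Suc p) ?X ! k"
      using omega_word_nth[OF ne pr, of k "Suc p"] lX by (simp del: upt_Suc funpow.simps)
  qed (use lX in simp)
  have "?X = map ?w [0..<p] @ [?w p] @ drop (Suc p) ?X"
    using append_take_drop_id[of "Suc p" ?X] unfolding prefix[symmetric] by simp
  then have X2: "(hom h ^^ Suc (Suc p)) [a]
      = hom h (map ?w [0..<p]) @ h (?w p) @ hom h (drop (Suc p) ?X)"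
    by (metis funpow.simps(2) comp_apply hom_append hom_single)
  have pos: "hpos h ?w p + t < length ((hom h ^^ Suc (Suc p)) [a])"
    unfolding X2 hpos_def using t by simp
  show ?thesis
    unfolding omega_word_nth[OF ne pr pos] unfolding X2 hpos_def using t by (simp add: nth_append)
qed

lemma iterate_ultimately_periodic:
  assumes step: "\<And>n. a (Suc n) = g (a n)" and fin: "finite (range a)"
  shows "ultimately_periodic a"
proof -
  have "\<not> inj_on a {0 .. card (range a)}"
  proof
    assume "inj_on a {0 .. card (range a)}"
    then have "card {0 .. card (range a)} \<le> card (range a)"
      by (rule card_inj_on_le) (auto simp: fin)
    then show False by simp
  qed
  then obtain m n where mn: "m < n" "a m = a n"
    unfolding inj_on_def by (metis linorder_neqE_nat)
  have "a (t + (n - m)) = a t" if "m \<le> t" for t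
    using that
  proof (induction t rule: dec_induct)
    case (step t)
    then show ?case using assms by (metis add_Suc)
  qed (use mn in simp)
  then show ?thesis unfolding ultimately_periodic_def using mn by (intro exI[of _ "n - m"]) auto
qed

lemma ultimately_periodic_shifted_image:
  assumes "ultimately_periodic a" and f: "\<And>k. f (Suc k) = G (a k)"
  shows "ultimately_periodic f"
proof -
  from assms(1) obtain p N where p: "p > 0" "\<And>n. n \<ge> N \<Longrightarrow> a (n + p) = a n"
    unfolding ultimately_periodic_def by blast
  have "f (Suc m + p) = f (Suc m)" if "m \<ge> N" for m
    using f[of "m + p"] f[of m] p(2)[OF that] by simp
  then have "f (n + p) = f n" if "n \<ge> Suc N" for n
    using that by (metis Suc_le_D Suc_le_mono)
  then show ?thesis unfolding ultimately_periodic_def using p(1) by blast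
qed

definition signed_factor :: "(nat \<Rightarrow> 'a) \<Rightarrow> nat \<Rightarrow> nat \<Rightarrow> 'a stretch" where
  "signed_factor v u u' = (if u < u' then Pos (map v [u..<u'])
     else if u' < u then Neg (map v [u'..<u]) else Eps)"

lemma left_stretch_signed_factor:
  "left_stretch h w ik ik' = signed_factor w ik' (hpos h w ik)"
  unfolding left_stretch_def signed_factor_def Let_def by simp

lemma right_stretch_signed_factor:
  assumes "0 < hpos h w (Suc jk)"
  shows "right_stretch h w jk jk' = signed_factor w (hpos h w (Suc jk)) (Suc jk')"
  using assms unfolding right_stretch_def signed_factor_def Let_def
  by (cases "hpos h w (Suc jk)") auto

lemma signed_factor_shift:
  assumes "\<And>t. t < L \<Longrightarrow> w (B + t) = v t" and "u \<le> L" and "u' \<le> L"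
  shows "signed_factor w (B + u) (B + u') = signed_factor v u u'"
proof -
  have "map w [B + x..<B + y] = map v [x..<y]" if "y \<le> L" for x y
    by (rule nth_equalityI) (use that assms(1) in \<open>auto simp: add.assoc\<close>)
  then show ?thesis unfolding signed_factor_def using assms(2,3) by auto
qed

definition first_index :: "('a \<Rightarrow> bool) \<Rightarrow> 'a list \<Rightarrow> nat" where
  "first_index P xs = Min {t. t < length xs \<and> P (xs ! t)}"

definition last_index :: "('a \<Rightarrow> bool) \<Rightarrow> 'a list \<Rightarrow> nat" where
  "last_index P xs = Max {t. t < length xs \<and> P (xs ! t)}"

lemma index_set_nonempty:
  "\<exists>c\<in>set xs. P c \<Longrightarrow> {t. t < length xs \<and> P (xs ! t)} \<noteq> {}"
  by (auto simp: in_set_conv_nth)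

lemma first_index:
  assumes "\<exists>c\<in>set xs. P c"
  shows "first_index P xs < length xs" and "P (xs ! first_index P xs)"
  using Min_in[OF _ index_set_nonempty[OF assms]] unfolding first_index_def by auto

lemma last_index:
  assumes "\<exists>c\<in>set xs. P c"
  shows "last_index P xs < length xs" and "P (xs ! last_index P xs)"
  using Max_in[OF _ index_set_nonempty[OF assms]] unfolding last_index_def by auto

lemma first_index_least: "t < length xs \<Longrightarrow> P (xs ! t) \<Longrightarrow> first_index P xs \<le> t"
  unfolding first_index_def by (rule Min_le) auto

lemma last_index_greatest: "t < length xs \<Longrightarrow> P (xs ! t) \<Longrightarrow> t \<le> last_index P xs"
  unfolding last_index_def by (rule Max_ge) auto

lemma first_index_eqI:
  "t < length xs \<Longrightarrow> P (xs ! t) \<Longrightarrow> (\<And>t'. t' < t \<Longrightarrow> \<not> P (xs ! t')) \<Longrightarrow> first_index P xs = t"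
  unfolding first_index_def by (rule Min_eqI) (auto simp: not_less[symmetric])

lemma last_index_eqI:
  "t < length xs \<Longrightarrow> P (xs ! t) \<Longrightarrow> (\<And>t'. t < t' \<Longrightarrow> t' < length xs \<Longrightarrow> \<not> P (xs ! t'))
    \<Longrightarrow> last_index P xs = t"
  unfolding last_index_def by (rule Max_eqI) (auto simp: not_less[symmetric])

section \<open>Block structure of a fixed point\<close>

(* A fixed point w = h(w_0) h(w_1) ... of a nonerasing morphism. *)
locale fixed_point =
  fixes h :: "'a \<Rightarrow> 'a list" and w :: "nat \<Rightarrow> 'a"
  assumes image_nonempty: "\<And>a. h a \<noteq> []"
    and fixed: "\<And>p t. t < length (h (w p)) \<Longrightarrow> w (hpos h w p + t) = h (w p) ! t"
begin

abbreviation hp :: "nat \<Rightarrow> nat" where "hp \<equiv> hpos h w"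

lemma hp_0 [simp]: "hp 0 = 0"
  by (simp add: hpos_def)

lemma hp_Suc: "hp (Suc p) = hp p + length (h (w p))"
  by (simp add: hpos_def)

lemma hp_strict_mono: "p < q \<Longrightarrow> hp p < hp q"
proof (induction q)
  case (Suc q)
  then show ?case using hp_Suc[of q] image_nonempty[of "w q"] by (cases "p = q") auto
qed simp

lemma hp_mono: "p \<le> q \<Longrightarrow> hp p \<le> hp q"
  using hp_strict_mono by (cases "p = q") (auto intro: less_imp_le)

lemma le_hp: "p \<le> hp p"
proof (induction p)
  case (Suc p)
  then show ?case using hp_Suc[of p] image_nonempty[of "w p"] by (cases "h (w p)") auto
qed simp

lemma position_in_block: "\<exists>Q t. n = hp Q + t \<and> t < length (h (w Q))"
proof -
  have ex: "\<exists>Q. n < hp (Suc Q)" using le_hp[of "Suc n"] by (intro exI[of _ n]) simp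
  define Q where "Q = (LEAST Q. n < hp (Suc Q))"
  have upper: "n < hp (Suc Q)" unfolding Q_def by (rule LeastI_ex[OF ex])
  have lower: "hp Q \<le> n"
  proof (cases Q)
    case (Suc Q0)
    have "\<not> n < hp (Suc Q0)"
      using Suc Least_le[of "\<lambda>Q. n < hp (Suc Q)" Q0] unfolding Q_def by auto
    then show ?thesis using Suc by simp
  qed simp
  show ?thesis using upper lower hp_Suc[of Q] by (intro exI[of _ Q] exI[of _ "n - hp Q"]) auto
qed

lemma hp_add: "hp (A + s) = hp A + length (hom h (map w [A..<A + s]))"
  unfolding hpos_def using upt_add_eq_append[of 0 A s] by simp

lemma image_of_factor:
  "t < length (hom h (map w [A..<A + s])) \<Longrightarrow> w (hp A + t) = hom h (map w [A..<A + s]) ! t"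
proof (induction s arbitrary: t)
  case (Suc s)
  let ?hs = "hom h (map w [A..<A + s])"
  have eq: "hom h (map w [A..<A + Suc s]) = ?hs @ h (w (A + s))" by simp
  show ?case
  proof (cases "t < length ?hs")
    case True
    then show ?thesis using Suc.IH eq by (simp add: nth_append)
  next
    case False
    define t' where "t' = t - length ?hs"
    have t': "t = length ?hs + t'" "t' < length (h (w (A + s)))"
      using False Suc.prems eq t'_def by auto
    have "w (hp A + t) = w (hp (A + s) + t')" using hp_add[of A s] t' by (simp add: add.assoc)
    also have "\<dots> = h (w (A + s)) ! t'" using fixed t' by blast
    finally show ?thesis using eq t' by (simp add: nth_append)
  qed
qed simp

lemma factor_in_block:
  "s \<le> length (h (w P)) \<Longrightarrow> map w [hp P..<hp P + s] = take s (h (w P))"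
  by (rule nth_equalityI) (auto simp: fixed)

lemma hp_in_block:
  "s \<le> length (h (w P)) \<Longrightarrow> hp (hp P + s) = hp (hp P) + length (hom h (take s (h (w P))))"
  using hp_add[of "hp P" s] factor_in_block by simp

(* Applying the fixed-point property twice: h(h(w_P)) occurs at position hp (hp P). *)
lemma second_image:
  "t < length (hom h (h (w P))) \<Longrightarrow> w (hp (hp P) + t) = hom h (h (w P)) ! t"
  using image_of_factor[of t "hp P" "length (h (w P))"] factor_in_block[of "length (h (w P))" P]
  by simp

end

section \<open>Delta-sequences and their trackers\<close>

(*
  A Delta-sequence u^(k) = w_(i k) ... w_(j k) in a fixed point w.
*)
locale delta_runs = fixed_point h w for h :: "'a \<Rightarrow> 'a list" and w +
  fixes D :: "'a set" and M :: nat and i j :: "nat \<Rightarrow> nat"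
  assumes image_length_le: "\<And>a. length (h a) \<le> M"
    and image_alphabet: "\<And>a. set (hom h (h a)) = set (h a)"
    and maximal_runs: "\<And>k. max_block D w (i k) (j k)"
    and start_large: "\<And>k. M < i k"
    and run_long: "\<And>k. M * M < j k - i k + 1"
    and next_start_le: "\<And>k. i (Suc k) \<le> hpos h w (i k + M)"
    and next_end_ge: "\<And>k. hpos h w (j k - M + 1) - 1 \<le> j (Suc k)"
begin

definition E :: "'a set" where
  "E = {a. \<exists>c\<in>set (h a). c \<notin> D}"

lemma image_of_nonexiting: "a \<notin> E \<Longrightarrow> b \<in> set (h a) \<Longrightarrow> b \<notin> E"
  using image_alphabet[of a] unfolding E_def set_hom by blast

lemma image_of_exiting: "a \<in> E \<Longrightarrow> \<exists>b\<in>set (h a). b \<in> E"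
  using image_alphabet[of a] unfolding E_def set_hom by blast

abbreviation first_out :: "'a \<Rightarrow> nat" where "first_out a \<equiv> first_index (\<lambda>c. c \<notin> D) (h a)"
abbreviation last_out :: "'a \<Rightarrow> nat" where "last_out a \<equiv> last_index (\<lambda>c. c \<notin> D) (h a)"
abbreviation first_exit :: "'a \<Rightarrow> nat" where "first_exit a \<equiv> first_index (\<lambda>c. c \<in> E) (h a)"
abbreviation last_exit :: "'a \<Rightarrow> nat" where "last_exit a \<equiv> last_index (\<lambda>c. c \<in> E) (h a)"

lemma out_offsets:
  assumes "a \<in> E"
  shows "first_out a < length (h a)" "h a ! first_out a \<notin> D"
    and "last_out a < length (h a)" "h a ! last_out a \<notin> D"
  using first_index[of "h a" "\<lambda>c. c \<notin> D"] last_index[of "h a" "\<lambda>c. c \<notin> D"] assms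
  unfolding E_def by auto

lemma exit_offsets:
  assumes "a \<in> E"
  shows "first_exit a < length (h a)" "h a ! first_exit a \<in> E"
    and "last_exit a < length (h a)" "h a ! last_exit a \<in> E"
  using first_index[of "h a" "\<lambda>c. c \<in> E"] last_index[of "h a" "\<lambda>c. c \<in> E"]
    image_of_exiting[OF assms] by auto

lemma exiting_in_exiting_block:
  "w (hp Q + t) \<in> E \<Longrightarrow> t < length (h (w Q)) \<Longrightarrow> w Q \<in> E"
  using image_of_nonexiting fixed by (metis nth_mem)

lemma out_in_exiting_block:
  "w (hp Q + t) \<notin> D \<Longrightarrow> t < length (h (w Q)) \<Longrightarrow> w Q \<in> E"
  using fixed unfolding E_def by (metis (mono_tags, lifting) mem_Collect_eq nth_mem)

lemma M_pos: "1 \<le> M"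
  using image_length_le[of undefined] image_nonempty[of undefined] by (cases "h undefined") auto

lemma start_pos: "1 \<le> i k"
  using start_large[of k] M_pos by linarith

lemma in_run: "i k \<le> p \<Longrightarrow> p \<le> j k \<Longrightarrow> w p \<in> D"
  using maximal_runs[of k] unfolding max_block_def by auto

lemma before_start: "w (i k - 1) \<notin> D"
  using maximal_runs[of k] start_pos[of k] unfolding max_block_def by auto

lemma after_end: "w (Suc (j k)) \<notin> D"
  using maximal_runs[of k] unfolding max_block_def by auto

(* Since M^2 + 1 >= 2M, every run is longer than 2M. *)
lemma run_long2: "i k + 2 * M \<le> j k + 1"
proof -
  have "2 * M \<le> M * M + 1" by (cases M) (simp_all add: algebra_simps)
  moreover have "i k \<le> j k" using maximal_runs[of k] unfolding max_block_def by simp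
  ultimately show ?thesis using run_long[of k] by linarith
qed

lemma M_le_end: "M \<le> j k"
  using run_long2[of k] start_large[of k] by linarith

lemma next_end_bound: "hp (j k - M + 1) \<le> Suc (j (Suc k))"
  using next_end_ge[of k] by linarith

(* The block of w_(i k + M) does not start after that of w_(j k - M + 1), as the run is long. *)
lemma inner_window: "hp (i k + M) \<le> hp (j k - M + 1)"
  using run_long2[of k] M_le_end[of k] by (intro hp_mono) linarith

definition last_exit_below :: "nat \<Rightarrow> nat \<Rightarrow> bool" where
  "last_exit_below X q \<longleftrightarrow> q < X \<and> w q \<in> E \<and> (\<forall>r. q < r \<and> r < X \<longrightarrow> w r \<notin> E)"

(* The letter just before u^(k+1) is outside Delta, so it lies in the image of an exiting
   letter at a position below i k + M. *)
lemma left_boundary_block: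
  "\<exists>Q t. i (Suc k) - 1 = hp Q + t \<and> t < length (h (w Q)) \<and> w Q \<in> E \<and> Q < i k + M"
proof -
  obtain Q t where Qt: "i (Suc k) - 1 = hp Q + t" "t < length (h (w Q))"
    using position_in_block by blast
  have "w Q \<in> E" using out_in_exiting_block[of Q t] before_start[of "Suc k"] Qt by simp
  moreover have "Q < i k + M"
  proof (rule ccontr)
    assume "\<not> Q < i k + M"
    then have "hp (i k + M) \<le> hp Q" by (simp add: hp_mono)
    with Qt next_start_le[of k] start_pos[of "Suc k"] show False by linarith
  qed
  ultimately show ?thesis using Qt by blast
qed

lemma left_tracker_exists: "\<exists>q. last_exit_below (i k + M) q"
proof -
  let ?S = "{r. r < i k + M \<and> w r \<in> E}"
  have fin: "finite ?S" by simp
  have "?S \<noteq> {}" using left_boundary_block[of k] by blast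
  then have "Max ?S \<in> ?S" using fin by (rule Max_in[rotated])
  moreover have "w r \<notin> E" if "Max ?S < r" "r < i k + M" for r
  proof
    assume "w r \<in> E"
    then have "r \<le> Max ?S" using that(2) by (intro Max_ge[OF fin]) simp
    then show False using that(1) by simp
  qed
  ultimately show ?thesis unfolding last_exit_below_def by blast
qed

lemma start_from_left_tracker:
  assumes q: "last_exit_below (i k + M) q"
  shows "i (Suc k) = hp q + last_out (w q) + 1"
proof -
  obtain Q t where Qt: "i (Suc k) - 1 = hp Q + t" "t < length (h (w Q))"
    and QE: "w Q \<in> E" and QI: "Q < i k + M"
    using left_boundary_block by blast
  have qE: "w q \<in> E" and Qq: "Q \<le> q" and qI: "q < i k + M"
    using q QE QI unfolding last_exit_below_def by (auto simp: not_le[symmetric])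
  have block_in_run: "hp (Suc q) \<le> Suc (j (Suc k))"
    using hp_mono[of "Suc q" "i k + M"] qI inner_window[of k] next_end_bound[of k] by linarith
  have "Q = q"
  proof (rule ccontr)
    assume "Q \<noteq> q"
    then have "hp (Suc Q) \<le> hp q" using Qq hp_mono by simp
    moreover have "w (hp q + last_out (w q)) \<notin> D" using out_offsets[OF qE] fixed by simp
    ultimately show False
      using in_run[of "Suc k" "hp q + last_out (w q)"] out_offsets[OF qE] hp_Suc[of Q] hp_Suc[of q]
        Qt block_in_run start_pos[of "Suc k"] by linarith
  qed
  have "last_out (w q) = t"
  proof (rule last_index_eqI)
    show "t < length (h (w q))" and "h (w q) ! t \<notin> D"
      using fixed[of t q] Qt \<open>Q = q\<close> before_start[of "Suc k"] by auto
    fix t' assume "t < t'" "t' < length (h (w q))"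
    then show "\<not> h (w q) ! t' \<notin> D"
      using in_run[of "Suc k" "hp q + t'"] fixed[of t' q] Qt \<open>Q = q\<close> hp_Suc[of q] block_in_run
        start_pos[of "Suc k"] by auto
  qed
  moreover have "i (Suc k) - 1 = hp q + t" using Qt(1) \<open>Q = q\<close> by simp
  ultimately show ?thesis using start_pos[of "Suc k"] by linarith
qed

(* An exiting letter at or beyond i k + M has its image beyond i (k+1) + M: its last
   non-Delta letter cannot fall into u^(k+1), and u^(k+1) is longer than 2M. *)
lemma exiting_beyond_left_window:
  assumes "i k + M \<le> R" and RE: "w R \<in> E"
  shows "i (Suc k) + M \<le> hp R"
proof -
  have "i (Suc k) \<le> hp R + last_out (w R)"
    using next_start_le[of k] hp_mono[OF assms(1)] by linarith
  moreover have "w (hp R + last_out (w R)) \<notin> D" using out_offsets[OF RE] fixed by simp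
  ultimately have "Suc (j (Suc k)) \<le> hp R + last_out (w R)"
    using in_run[of "Suc k"] not_less_eq_eq by blast
  then show ?thesis
    using out_offsets[OF RE] image_length_le[of "w R"] run_long2[of "Suc k"] by linarith
qed

lemma left_tracker_step:
  assumes q: "last_exit_below (i k + M) q"
  shows "last_exit_below (i (Suc k) + M) (hp q + last_exit (w q))"
proof -
  have qE: "w q \<in> E" using q unfolding last_exit_below_def by auto
  have start: "i (Suc k) = hp q + last_out (w q) + 1" using start_from_left_tracker[OF q] .
  have "w r \<notin> E" if r: "hp q + last_exit (w q) < r" "r < i (Suc k) + M" for r
  proof
    assume rE: "w r \<in> E"
    obtain R t where Rt: "r = hp R + t" "t < length (h (w R))" using position_in_block by blast
    have RE: "w R \<in> E" using exiting_in_exiting_block[of R t] rE Rt by simp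
    consider "R < q" | "R = q" | "q < R" by linarith
    then show False
    proof cases
      case 1
      then show False using hp_mono[of "Suc R" q] hp_Suc[of R] Rt r by simp
    next
      case 2
      then show False using last_index_greatest[of t "h (w q)"] Rt rE fixed r by fastforce
    next
      case 3
      then have "i k + M \<le> R" using q RE unfolding last_exit_below_def by (metis not_le)
      then have "i (Suc k) + M \<le> hp R" by (rule exiting_beyond_left_window[OF _ RE])
      then show False using Rt r by linarith
    qed
  qed
  moreover have "hp q + last_exit (w q) < i (Suc k) + M"
    using exit_offsets[OF qE] image_length_le[of "w q"] start by linarith
  ultimately show ?thesis
    unfolding last_exit_below_def using exit_offsets[OF qE] fixed by simp
qed

definition first_exit_from :: "nat \<Rightarrow> nat \<Rightarrow> bool" where
  "first_exit_from X q \<longleftrightarrow> X \<le> q \<and> w q \<in> E \<and> (\<forall>r. X \<le> r \<and> r < q \<longrightarrow> w r \<notin> E)"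

lemma right_boundary_block:
  "\<exists>Q t. Suc (j (Suc k)) = hp Q + t \<and> t < length (h (w Q)) \<and> w Q \<in> E \<and> j k - M + 1 \<le> Q"
proof -
  obtain Q t where Qt: "Suc (j (Suc k)) = hp Q + t" "t < length (h (w Q))"
    using position_in_block by blast
  have "w Q \<in> E" using out_in_exiting_block[of Q t] after_end[of "Suc k"] Qt by simp
  moreover have "j k - M + 1 \<le> Q"
  proof (rule ccontr)
    assume "\<not> j k - M + 1 \<le> Q"
    then have "hp (Suc Q) \<le> hp (j k - M + 1)" by (simp add: hp_mono)
    with Qt next_end_bound[of k] hp_Suc[of Q] show False by linarith
  qed
  ultimately show ?thesis using Qt by blast
qed

lemma right_tracker_exists: "\<exists>q. first_exit_from (j k - M + 1) q"
proof -
  let ?S = "{r. j k - M + 1 \<le> r \<and> w r \<in> E}"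
  have "?S \<noteq> {}" using right_boundary_block[of k] by blast
  then have "(LEAST r. r \<in> ?S) \<in> ?S" by (metis LeastI_ex all_not_in_conv)
  moreover have "w r \<notin> E" if "j k - M + 1 \<le> r" "r < (LEAST r. r \<in> ?S)" for r
    using that not_less_Least by blast
  ultimately show ?thesis unfolding first_exit_from_def by blast
qed

lemma end_from_right_tracker:
  assumes q: "first_exit_from (j k - M + 1) q"
  shows "Suc (j (Suc k)) = hp q + first_out (w q)"
proof -
  obtain Q t where Qt: "Suc (j (Suc k)) = hp Q + t" "t < length (h (w Q))"
    and QE: "w Q \<in> E" and QI: "j k - M + 1 \<le> Q"
    using right_boundary_block by blast
  have qE: "w q \<in> E" and qQ: "q \<le> Q" and qI: "j k - M + 1 \<le> q"
    using q QE QI unfolding first_exit_from_def by (auto simp: not_le[symmetric])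
  have block_in_run: "i (Suc k) \<le> hp q"
    using hp_mono[OF qI] inner_window[of k] next_start_le[of k] by linarith
  have "Q = q"
  proof (rule ccontr)
    assume "Q \<noteq> q"
    then have "hp (Suc q) \<le> hp Q" using qQ hp_mono by simp
    moreover have "w (hp q + first_out (w q)) \<notin> D" using out_offsets[OF qE] fixed by simp
    ultimately show False
      using in_run[of "Suc k" "hp q + first_out (w q)"] out_offsets[OF qE] hp_Suc[of q]
        Qt block_in_run by linarith
  qed
  have "first_out (w q) = t"
  proof (rule first_index_eqI)
    show "t < length (h (w q))" and "h (w q) ! t \<notin> D"
      using fixed[of t q] Qt \<open>Q = q\<close> after_end[of "Suc k"] by auto
    fix t' assume "t' < t"
    then show "\<not> h (w q) ! t' \<notin> D"
      using in_run[of "Suc k" "hp q + t'"] fixed[of t' q] Qt \<open>Q = q\<close> block_in_run by auto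
  qed
  then show ?thesis using Qt \<open>Q = q\<close> by simp
qed

lemma exiting_before_right_window:
  assumes "R < j k - M + 1" and RE: "w R \<in> E"
  shows "hp (Suc R) \<le> j (Suc k) - M + 1"
proof -
  have "hp (Suc R) \<le> Suc (j (Suc k))"
    using hp_mono[of "Suc R" "j k - M + 1"] assms(1) next_end_bound[of k] by simp
  then have "hp R + last_out (w R) \<le> j (Suc k)" using out_offsets[OF RE] hp_Suc[of R] by linarith
  moreover have "w (hp R + last_out (w R)) \<notin> D" using out_offsets[OF RE] fixed by simp
  ultimately have "hp R + last_out (w R) < i (Suc k)"
    using in_run[of "Suc k"] not_le by blast
  then show ?thesis
    using hp_Suc[of R] image_length_le[of "w R"] run_long2[of "Suc k"] M_le_end[of "Suc k"]
    by linarith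
qed

lemma right_tracker_step:
  assumes q: "first_exit_from (j k - M + 1) q"
  shows "first_exit_from (j (Suc k) - M + 1) (hp q + first_exit (w q))"
proof -
  have qE: "w q \<in> E" using q unfolding first_exit_from_def by auto
  have "w r \<notin> E" if r: "j (Suc k) - M + 1 \<le> r" "r < hp q + first_exit (w q)" for r
  proof
    assume rE: "w r \<in> E"
    obtain R t where Rt: "r = hp R + t" "t < length (h (w R))" using position_in_block by blast
    have RE: "w R \<in> E" using exiting_in_exiting_block[of R t] rE Rt by simp
    consider "R < q" | "R = q" | "q < R" by linarith
    then show False
    proof cases
      case 1
      then have "R < j k - M + 1" using q RE unfolding first_exit_from_def by (metis not_le)
      then have "hp (Suc R) \<le> j (Suc k) - M + 1" by (rule exiting_before_right_window[OF _ RE])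
      then show False using hp_Suc[of R] Rt r by linarith
    next
      case 2
      then show False using first_index_least[of t "h (w q)"] Rt rE fixed r by fastforce
    next
      case 3
      then show False
        using hp_mono[of "Suc q" R] hp_Suc[of q] exit_offsets[OF qE] Rt r by simp
    qed
  qed
  moreover have "j (Suc k) - M + 1 \<le> hp q + first_exit (w q)"
    using end_from_right_tracker[OF q] out_offsets[OF qE] image_length_le[of "w q"]
      M_le_end[of "Suc k"] by linarith
  ultimately show ?thesis
    unfolding first_exit_from_def using exit_offsets[OF qE] fixed by simp
qed

definition left_tracker :: "nat \<Rightarrow> nat" where
  "left_tracker = rec_nat (SOME q. last_exit_below (i 0 + M) q) (\<lambda>_ q. hp q + last_exit (w q))"

definition right_tracker :: "nat \<Rightarrow> nat" where
  "right_tracker = rec_nat (SOME q. first_exit_from (j 0 - M + 1) q) (\<lambda>_ q. hp q + first_exit (w q))"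

lemma left_tracker_0: "left_tracker 0 = (SOME q. last_exit_below (i 0 + M) q)"
  by (simp add: left_tracker_def)

lemma left_tracker_Suc: "left_tracker (Suc k) = hp (left_tracker k) + last_exit (w (left_tracker k))"
  by (simp add: left_tracker_def)

lemma right_tracker_0: "right_tracker 0 = (SOME q. first_exit_from (j 0 - M + 1) q)"
  by (simp add: right_tracker_def)

lemma right_tracker_Suc: "right_tracker (Suc k) = hp (right_tracker k) + first_exit (w (right_tracker k))"
  by (simp add: right_tracker_def)

lemma left_tracker: "last_exit_below (i k + M) (left_tracker k)"
proof (induction k)
  case 0
  show ?case unfolding left_tracker_0 by (rule someI_ex[OF left_tracker_exists])
next
  case (Suc k)
  show ?case unfolding left_tracker_Suc by (rule left_tracker_step[OF Suc.IH])
qed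

lemma right_tracker: "first_exit_from (j k - M + 1) (right_tracker k)"
proof (induction k)
  case 0
  show ?case unfolding right_tracker_0 by (rule someI_ex[OF right_tracker_exists])
next
  case (Suc k)
  show ?case unfolding right_tracker_Suc by (rule right_tracker_step[OF Suc.IH])
qed

lemma left_tracker_letter:
  "w (left_tracker (Suc k)) = h (w (left_tracker k)) ! last_exit (w (left_tracker k))"
  unfolding left_tracker_Suc
  using left_tracker[of k] exit_offsets(3) fixed unfolding last_exit_below_def by blast

lemma right_tracker_letter:
  "w (right_tracker (Suc k)) = h (w (right_tracker k)) ! first_exit (w (right_tracker k))"
  unfolding right_tracker_Suc
  using right_tracker[of k] exit_offsets(1) fixed unfolding first_exit_from_def by blast

(* The stretches sigma^(k+2) and rho^(k+2) read off inside h(h(x)), x the tracked letter. *)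
definition left_stretch_of :: "'a \<Rightarrow> 'a stretch" where
  "left_stretch_of x = signed_factor ((!) (hom h (h x)))
     (length (hom h (take (last_exit x) (h x))) + last_out (h x ! last_exit x) + 1)
     (length (hom h (take (Suc (last_out x)) (h x))))"

definition right_stretch_of :: "'a \<Rightarrow> 'a stretch" where
  "right_stretch_of x = signed_factor ((!) (hom h (h x)))
     (length (hom h (take (first_out x) (h x))))
     (length (hom h (take (first_exit x) (h x))) + first_out (h x ! first_exit x))"

lemma left_stretch_from_tracker:
  "left_stretch h w (i (Suc k)) (i (Suc (Suc k))) = left_stretch_of (w (left_tracker k))"
proof -
  define P where "P = left_tracker k"
  define x where "x = w P"
  define hh where "hh = hom h (h x)"
  have xE: "x \<in> E" using left_tracker[of k] unfolding x_def P_def last_exit_below_def by simp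
  note out = out_offsets[OF xE] and ex = exit_offsets[OF xE]
  have start1: "hp (i (Suc k)) = hp (hp P) + length (hom h (take (Suc (last_out x)) (h x)))"
    using start_from_left_tracker[OF left_tracker[of k]] hp_in_block[of "Suc (last_out x)" P] out
    unfolding P_def x_def by simp
  have tracker1: "hp (left_tracker (Suc k)) = hp (hp P) + length (hom h (take (last_exit x) (h x)))"
    using hp_in_block[of "last_exit x" P] ex unfolding P_def x_def left_tracker_Suc by simp
  have start2: "i (Suc (Suc k)) = hp (hp P)
      + (length (hom h (take (last_exit x) (h x))) + last_out (h x ! last_exit x) + 1)"
    using start_from_left_tracker[OF left_tracker[of "Suc k"]] tracker1 left_tracker_letter[of k]
    unfolding P_def x_def by simp
  have bounds: "length (hom h (take (Suc (last_out x)) (h x))) \<le> length hh"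
    "length (hom h (take (last_exit x) (h x))) + last_out (h x ! last_exit x) + 1 \<le> length hh"
    using length_hom_take_le length_hom_take_nth[OF ex(3), of h] out_offsets(3)[OF ex(4)]
    unfolding hh_def by simp_all
  have "left_stretch h w (i (Suc k)) (i (Suc (Suc k))) = left_stretch_of x"
    unfolding left_stretch_signed_factor start1 start2 left_stretch_of_def hh_def[symmetric]
    by (rule signed_factor_shift[OF _ bounds(2,1)]) (simp add: second_image hh_def x_def)
  then show ?thesis unfolding x_def P_def .
qed

lemma right_stretch_from_tracker:
  "right_stretch h w (j (Suc k)) (j (Suc (Suc k))) = right_stretch_of (w (right_tracker k))"
proof -
  define P where "P = right_tracker k"
  define x where "x = w P"
  define hh where "hh = hom h (h x)"
  have xE: "x \<in> E" using right_tracker[of k] unfolding x_def P_def first_exit_from_def by simp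
  note out = out_offsets[OF xE] and ex = exit_offsets[OF xE]
  have end1: "hp (Suc (j (Suc k))) = hp (hp P) + length (hom h (take (first_out x) (h x)))"
    using end_from_right_tracker[OF right_tracker[of k]] hp_in_block[of "first_out x" P] out
    unfolding P_def x_def by simp
  have tracker1: "hp (right_tracker (Suc k)) = hp (hp P) + length (hom h (take (first_exit x) (h x)))"
    using hp_in_block[of "first_exit x" P] ex unfolding P_def x_def right_tracker_Suc by simp
  have end2: "Suc (j (Suc (Suc k))) = hp (hp P)
      + (length (hom h (take (first_exit x) (h x))) + first_out (h x ! first_exit x))"
    using end_from_right_tracker[OF right_tracker[of "Suc k"]] tracker1 right_tracker_letter[of k]
    unfolding P_def x_def by simp
  have bounds: "length (hom h (take (first_out x) (h x))) \<le> length hh"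
    "length (hom h (take (first_exit x) (h x))) + first_out (h x ! first_exit x) \<le> length hh"
    using length_hom_take_nth[of "first_out x" "h x" h] length_hom_take_nth[of "first_exit x" "h x" h]
      out ex(1) out_offsets[OF ex(2)] unfolding hh_def by auto
  have "right_stretch h w (j (Suc k)) (j (Suc (Suc k)))
      = signed_factor w (hp (Suc (j (Suc k)))) (Suc (j (Suc (Suc k))))"
    using le_hp[of "Suc (j (Suc k))"] by (intro right_stretch_signed_factor) simp
  also have "\<dots> = right_stretch_of x"
    unfolding end1 end2 right_stretch_of_def hh_def[symmetric]
    by (rule signed_factor_shift[OF _ bounds(1,2)]) (simp add: second_image hh_def x_def)
  finally show ?thesis unfolding x_def P_def .
qed

lemma stretches_ultimately_periodic:
  assumes "finite (UNIV :: 'a set)"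
  shows "ultimately_periodic (\<lambda>k. left_stretch h w (i k) (i (Suc k)))"
    and "ultimately_periodic (\<lambda>k. right_stretch h w (j k) (j (Suc k)))"
proof -
  have "ultimately_periodic (\<lambda>k. w (left_tracker k))"
    using left_tracker_letter assms by (intro iterate_ultimately_periodic) (auto intro: finite_subset)
  then show "ultimately_periodic (\<lambda>k. left_stretch h w (i k) (i (Suc k)))"
    using left_stretch_from_tracker by (rule ultimately_periodic_shifted_image)
  have "ultimately_periodic (\<lambda>k. w (right_tracker k))"
    using right_tracker_letter assms by (intro iterate_ultimately_periodic) (auto intro: finite_subset)
  then show "ultimately_periodic (\<lambda>k. right_stretch h w (j k) (j (Suc k)))"
    using right_stretch_from_tracker by (rule ultimately_periodic_shifted_image)
qed

end

lemma delta_runs_omega_word: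
  fixes h :: "'a::finite \<Rightarrow> 'a list"
  assumes ne: "nonerasing h" and pr: "prolongable h w0"
    and alph: "\<forall>a. \<forall>n\<ge>1. set ((hom h ^^ n) [a]) = set (h a)"
    and ds: "delta_sequence h (omega_word h w0) D i j"
  shows "delta_runs h (omega_word h w0) D (max_len h) i j"
proof -
  let ?w = "omega_word h w0" and ?M = "max_len h"
  have runs: "\<And>k. max_block D ?w (i k) (j k)" "\<And>k. ?M < i k" "\<And>k. ?M * ?M < j k - i k + 1"
    "\<And>k. i (Suc k) \<le> hpos h ?w (i k + ?M)" "\<And>k. hpos h ?w (j k - ?M + 1) - 1 \<le> j (Suc k)"
    using ds unfolding delta_sequence_def Let_def occ_le_def power2_eq_square by simp_all
  have alph2: "set (hom h (h a)) = set (h a)" for a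
  proof -
    have "set ((hom h ^^ 2) [a]) = set (h a)" using alph by simp
    then show ?thesis by (simp add: numeral_2_eq_2)
  qed
  have "length (h a) \<le> ?M" for a
    unfolding max_len_def by (rule Max_ge) auto
  moreover have "h a \<noteq> []" for a
    using ne unfolding nonerasing_def by blast
  ultimately show ?thesis
    using omega_word_fixed_point[OF ne pr] alph2 runs by unfold_locales blast+
qed

theorem lemma14:
  fixes h :: "'a::finite \<Rightarrow> 'a list" and w0 :: 'a and D :: "'a set"
    and i j :: "nat \<Rightarrow> nat"
  assumes "nonerasing h"
    and "prolongable h w0"
    and "\<not> ultimately_periodic (omega_word h w0)"
    and "\<forall>a. \<forall>n\<ge>1. set ((hom h ^^ n) [a]) = set (h a)"
    and "D \<noteq> {}" and "D \<noteq> UNIV"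
    and "delta_sequence h (omega_word h w0) D i j"
  shows "ultimately_periodic (\<lambda>k. left_stretch h (omega_word h w0) (i k) (i (Suc k)))
     \<and> ultimately_periodic (\<lambda>k. right_stretch h (omega_word h w0) (j k) (j (Suc k)))"
proof -
  interpret delta_runs h "omega_word h w0" D "max_len h" i j
    using delta_runs_omega_word[OF assms(1,2,4,7)] .
  show ?thesis using stretches_ultimately_periodic[OF finite_UNIV] by simp
qed

end
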